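(* Let $G$ be a group with identity $e$ and let $\mathcal I\subseteq G$ be a set of involutions ($i^2=e$ for $i\in\mathcal I$) such that $G=\langle \mathcal I\rangle$ and for every $a,b\in\mathcal I$ there exists $t\in G$ with $t^2=ab$. Let $H$ be an arbitrary abelian group. If $f:G\to H$ satisfies $f(xy)+f(xy^{-1})=2f(x)$ for all $x,y\in G$ and $f(e)=0$, then $f$ is a group homomorphism and also satisfies $f(xy)+f(x^{-1}y)=2f(y)$ for all $x,y\in G$. Consequently, $S_1(G,H)=S_{1,2}(G,H)=\mathrm{Hom}(G,H)\cong \mathrm{Hom}(G/[G,G],H)$.
   Context: $H$ is written additively. $S_1(G,H)$ denotes the set of functions $f:G\to H$ with $f(e)=0$ satisfying (J1): $f(xy)+f(xy^{-1})=2f(x)$ for all $x,y\in G$; $S_2(G,H)$ is the set of such normalized functions satisfying (J2): $f(xy)+f(x^{-1}y)=2f(y)$ for all $x,y\in G$; and $S_{1,2}(G,H)=S_1(G,H)\cap S_2(G,H)$. $[G,G]$ is the commutator subgroup, so $G/[G,G]$ is the abelianization. *)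

theory Defs
  imports "HOL-Algebra.Algebra"
begin

definition S1 :: "('g, 'm) monoid_scheme \<Rightarrow> ('g \<Rightarrow> 'h::ab_group_add) set" where
  "S1 G = {f \<in> extensional (carrier G). f \<one>\<^bsub>G\<^esub> = 0 \<and>
     (\<forall>x\<in>carrier G. \<forall>y\<in>carrier G.
        f (x \<otimes>\<^bsub>G\<^esub> y) + f (x \<otimes>\<^bsub>G\<^esub> inv\<^bsub>G\<^esub> y) = f x + f x)}"

definition S2 :: "('g, 'm) monoid_scheme \<Rightarrow> ('g \<Rightarrow> 'h::ab_group_add) set" where
  "S2 G = {f \<in> extensional (carrier G). f \<one>\<^bsub>G\<^esub> = 0 \<and>
     (\<forall>x\<in>carrier G. \<forall>y\<in>carrier G.
        f (x \<otimes>\<^bsub>G\<^esub> y) + f (inv\<^bsub>G\<^esub> x \<otimes>\<^bsub>G\<^esub> y) = f y + f y)}"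

definition S12 :: "('g, 'm) monoid_scheme \<Rightarrow> ('g \<Rightarrow> 'h::ab_group_add) set" where
  "S12 G = S1 G \<inter> S2 G"

definition Hom :: "('g, 'm) monoid_scheme \<Rightarrow> ('g \<Rightarrow> 'h::ab_group_add) set" where
  "Hom G = {f \<in> extensional (carrier G).
     \<forall>x\<in>carrier G. \<forall>y\<in>carrier G. f (x \<otimes>\<^bsub>G\<^esub> y) = f x + f y}"

end

theory Submission
  imports Defs
begin

text \<open>Putting \<open>x = \<one>\<close> and \<open>y = x\<close> in Jensen's equation shows that \<open>f\<close> is odd and
  \<open>f (x \<otimes> x) = 2 f x\<close>, and then \<open>f (a \<otimes> y \<otimes> a) = 2 f a + f y = f y\<close> for every
  involution \<open>a\<close>.  So if involutions generate \<open>G\<close>, \<open>f\<close> is a class function.  For a class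
  function the defect \<open>D x y = f (x \<otimes> y) - f x - f y\<close> is a 2-cocycle with \<open>2 D = 0\<close> and
  \<open>D x (t \<otimes> t) = 0\<close>.  If the product of any two generating involutions is a square, the
  cocycle identity gives \<open>D (x \<otimes> a) b = D x a = D x b\<close> for generators \<open>a, b\<close>; hence
  \<open>D\<close> vanishes whenever its second argument is a generator, and then everywhere: \<open>f\<close> is a
  homomorphism.  Homomorphisms into an abelian group kill commutators, so they are exactly the
  homomorphisms of \<open>G/[G,G]\<close>.\<close>

lemma generators_subset_carrier: "generate G I = carrier G \<Longrightarrow> I \<subseteq> carrier G"
  using generate.incl[of _ I G] by blast

lemma (in group) right_invariant_on_generators_imp_constant:
  assumes gen: "generate G I = carrier G"
    and invariant: "\<And>x a. x \<in> carrier G \<Longrightarrow> a \<in> I \<Longrightarrow> \<phi> (x \<otimes> a) = \<phi> x"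
    and x: "x \<in> carrier G"
  shows "\<phi> x = \<phi> \<one>"
proof -
  define K where "K = {g \<in> carrier G. \<forall>y\<in>carrier G. \<phi> (y \<otimes> g) = \<phi> y}"
  have one: "\<one> \<in> K"
    by (simp add: K_def)
  have K_subgroup: "subgroup K G"
  proof (rule subgroupI)
    show "K \<subseteq> carrier G"
      by (auto simp: K_def)
    show "K \<noteq> {}"
      using one by blast
  next
    fix g assume g: "g \<in> K"
    have "\<phi> (y \<otimes> inv g) = \<phi> y" if y: "y \<in> carrier G" for y
    proof -
      have "\<phi> (y \<otimes> inv g) = \<phi> (y \<otimes> inv g \<otimes> g)"
        using g y by (simp add: K_def)
      also have "\<dots> = \<phi> y"
        using g y by (simp add: K_def m_assoc)
      finally show ?thesis .
    qed
    then show "inv g \<in> K"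
      using g by (simp add: K_def)
  next
    fix g h assume "g \<in> K" "h \<in> K"
    then show "g \<otimes> h \<in> K"
      by (simp add: K_def m_assoc[symmetric])
  qed
  have I_K: "I \<subseteq> K"
    using invariant generators_subset_carrier[OF gen] by (auto simp: K_def)
  have "generate G I \<subseteq> K"
    using generate_subgroup_incl[OF I_K K_subgroup] .
  then have "\<forall>y\<in>carrier G. \<phi> (y \<otimes> x) = \<phi> y"
    using gen x by (auto simp: K_def)
  from this[rule_format, OF one_closed] show ?thesis
    using x by simp
qed

locale jensen_map = group G for G (structure) +
  fixes f :: "'a \<Rightarrow> 'h::ab_group_add"
  assumes map_one: "f \<one> = 0"
    and jensen: "x \<in> carrier G \<Longrightarrow> y \<in> carrier G \<Longrightarrow> f (x \<otimes> y) + f (x \<otimes> inv y) = f x + f x"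
begin

definition defect :: "'a \<Rightarrow> 'a \<Rightarrow> 'h" where
  "defect x y = f (x \<otimes> y) - f x - f y"

lemma map_inv: "y \<in> carrier G \<Longrightarrow> f (inv y) = - f y"
  using jensen[of \<one> y] map_one by (simp add: eq_neg_iff_add_eq_0 add.commute)

lemma map_square: "x \<in> carrier G \<Longrightarrow> f (x \<otimes> x) = f x + f x"
  using jensen[of x x] map_one by simp

lemma map_sandwich:
  assumes "x \<in> carrier G" "y \<in> carrier G"
  shows "f (x \<otimes> y \<otimes> x) = f x + f x + f y"
proof -
  have "x \<otimes> inv (y \<otimes> x) = inv y"
    using assms by (simp add: inv_mult_group m_assoc[symmetric])
  then show ?thesis
    using jensen[of x "y \<otimes> x"] map_inv[of y] assms by (simp add: m_assoc algebra_simps)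
qed

lemma map_conj_involution:
  assumes "a \<in> carrier G" "a \<otimes> a = \<one>" "y \<in> carrier G"
  shows "f (a \<otimes> y \<otimes> a) = f y"
  using map_sandwich[of a y] map_square[of a] assms map_one by simp

lemma defect_one_left: "defect \<one> y = 0" if "y \<in> carrier G"
  using that map_one by (simp add: defect_def)

lemma defect_one_right: "defect x \<one> = 0" if "x \<in> carrier G"
  using that map_one by (simp add: defect_def)

lemma defect_square: "defect x x = 0" if "x \<in> carrier G"
  using map_square[OF that] by (simp add: defect_def)

lemma defect_cocycle:
  assumes "x \<in> carrier G" "y \<in> carrier G" "z \<in> carrier G"
  shows "defect x y + defect (x \<otimes> y) z = defect y z + defect x (y \<otimes> z)"
  using assms by (simp add: defect_def m_assoc algebra_simps)

lemma defect_inv_right: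
  assumes "x \<in> carrier G" "y \<in> carrier G"
  shows "defect x (inv y) = - defect x y"
proof -
  have "f (x \<otimes> inv y) = f x + f x - f (x \<otimes> y)"
    using jensen assms by (simp add: eq_diff_eq add.commute)
  then show ?thesis
    using map_inv[OF assms(2)] by (simp add: defect_def algebra_simps)
qed

lemma defect_mult_right_same:
  assumes "x \<in> carrier G" "y \<in> carrier G"
  shows "defect (x \<otimes> y) y = defect x y"
proof -
  have "defect x y + defect (x \<otimes> y) (inv y) = defect y (inv y) + defect x \<one>"
    using defect_cocycle[of x y "inv y"] assms by simp
  also have "\<dots> = 0"
    using assms map_one map_inv[of y] defect_one_right by (simp add: defect_def)
  finally show ?thesis
    using defect_inv_right[of "x \<otimes> y" y] assms by (simp add: add_eq_0_iff)
qed

text \<open>The map \<open>g \<mapsto> f (inv g \<otimes> y \<otimes> g)\<close> is invariant under right multiplication by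
  involutions, hence constant when they generate the group.\<close>

lemma map_commute_if_generated_by_involutions:
  assumes gen: "generate G I = carrier G" and involution: "\<And>a. a \<in> I \<Longrightarrow> a \<otimes> a = \<one>"
    and x: "x \<in> carrier G" and y: "y \<in> carrier G"
  shows "f (x \<otimes> y) = f (y \<otimes> x)"
proof -
  note I_carrier = generators_subset_carrier[OF gen, THEN subsetD]
  have conj_invariant: "f (inv g \<otimes> z \<otimes> g) = f z" if g: "g \<in> carrier G" and z: "z \<in> carrier G" for g z
  proof -
    have "f (inv g \<otimes> z \<otimes> g) = f (inv \<one> \<otimes> z \<otimes> \<one>)"
    proof (rule right_invariant_on_generators_imp_constant[OF gen _ g])
      fix u a assume u: "u \<in> carrier G" and a: "a \<in> I"
      have "inv a = a"
        using involution[OF a] I_carrier[OF a] by (simp add: inv_equality)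
      then have "inv (u \<otimes> a) \<otimes> z \<otimes> (u \<otimes> a) = a \<otimes> (inv u \<otimes> z \<otimes> u) \<otimes> a"
        using u z I_carrier[OF a] by (simp add: inv_mult_group m_assoc)
      then show "f (inv (u \<otimes> a) \<otimes> z \<otimes> (u \<otimes> a)) = f (inv u \<otimes> z \<otimes> u)"
        using map_conj_involution[of a "inv u \<otimes> z \<otimes> u"] involution[OF a] I_carrier[OF a] u z
        by simp
    qed
    then show ?thesis
      using z by simp
  qed
  have "inv x \<otimes> (x \<otimes> y) \<otimes> x = y \<otimes> x"
    using x y by (simp add: m_assoc[symmetric])
  then show ?thesis
    using conj_invariant[of x "x \<otimes> y"] x y by simp
qed

end

locale jensen_class_function = jensen_map +
  assumes map_commute: "x \<in> carrier G \<Longrightarrow> y \<in> carrier G \<Longrightarrow> f (x \<otimes> y) = f (y \<otimes> x)"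
begin

lemma defect_add_self:
  assumes x: "x \<in> carrier G" and y: "y \<in> carrier G"
  shows "defect x y + defect x y = 0"
proof -
  have "x \<otimes> (y \<otimes> inv x) \<otimes> x = x \<otimes> y"
    using x y by (simp add: m_assoc)
  then have "f (x \<otimes> y) = f x + f x + f (y \<otimes> inv x)"
    using map_sandwich[of x "y \<otimes> inv x"] x y by simp
  moreover have "f (y \<otimes> x) + f (y \<otimes> inv x) = f y + f y"
    using jensen x y by simp
  ultimately have "f (x \<otimes> y) + f (x \<otimes> y) = f x + f x + f y + f y"
    using map_commute[OF x y] by (simp add: algebra_simps)
  then show ?thesis
    by (simp add: defect_def algebra_simps)
qed

lemma defect_right_square:
  assumes x: "x \<in> carrier G" and t: "t \<in> carrier G"
  shows "defect x (t \<otimes> t) = 0"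
  using defect_cocycle[OF x t t] defect_mult_right_same[OF x t] defect_square[OF t]
    defect_add_self[OF x t] by simp

lemma defect_involution_if_product_is_square:
  assumes a: "a \<in> carrier G" "a \<otimes> a = \<one>" and b: "b \<in> carrier G"
    and t: "t \<in> carrier G" "t \<otimes> t = a \<otimes> b"
  shows "defect a b = 0"
proof -
  have "a \<otimes> t \<otimes> t = a \<otimes> (a \<otimes> b)"
    using a b t by (simp add: m_assoc)
  also have "\<dots> = b"
    using a b by (simp add: m_assoc[symmetric])
  finally have "a \<otimes> t \<otimes> t = b" .
  moreover have "a \<otimes> t \<otimes> inv t = a"
    using a t by (simp add: m_assoc)
  ultimately have "f b + f a = f (a \<otimes> t) + f (a \<otimes> t)"
    using jensen[of "a \<otimes> t" t] a t by simp
  also have "\<dots> = f a + f a + f t + f t"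
    using defect_add_self[OF a(1) t(1)] by (simp add: defect_def algebra_simps)
  also have "\<dots> = f (a \<otimes> b)"
    using map_square[OF a(1)] map_square[OF t(1)] a t map_one by simp
  finally show ?thesis
    by (simp add: defect_def algebra_simps)
qed

lemma defect_right_generator:
  assumes gen: "generate G I = carrier G" and involution: "\<And>a. a \<in> I \<Longrightarrow> a \<otimes> a = \<one>"
    and square: "\<And>a b. a \<in> I \<Longrightarrow> b \<in> I \<Longrightarrow> \<exists>t\<in>carrier G. t \<otimes> t = a \<otimes> b"
    and u: "u \<in> carrier G" and b: "b \<in> I"
  shows "defect u b = 0"
proof -
  note I_carrier = generators_subset_carrier[OF gen, THEN subsetD]
  have defect_generators: "defect a c = 0" "defect v (a \<otimes> c) = 0"
    if a: "a \<in> I" and c: "c \<in> I" and v: "v \<in> carrier G" for a c v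
  proof -
    obtain t where t: "t \<in> carrier G" "t \<otimes> t = a \<otimes> c"
      using square[OF a c] by blast
    show "defect a c = 0"
      using defect_involution_if_product_is_square[OF I_carrier[OF a] involution[OF a]
          I_carrier[OF c] t] .
    show "defect v (a \<otimes> c) = 0"
      using defect_right_square[OF v t(1)] t(2) by simp
  qed
  have shift: "defect (v \<otimes> a) c = defect v a" if v: "v \<in> carrier G" and a: "a \<in> I" and c: "c \<in> I"
    for v a c
  proof -
    have "defect v a + defect (v \<otimes> a) c = 0"
      using defect_cocycle[OF v I_carrier[OF a] I_carrier[OF c]] defect_generators[OF a c v] by simp
    also have "\<dots> = defect v a + defect v a"
      using defect_add_self[OF v I_carrier[OF a]] by simp
    finally show ?thesis
      by simp
  qed
  have "defect u b = defect \<one> b"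
  proof (rule right_invariant_on_generators_imp_constant[OF gen, of "\<lambda>v. defect v b", OF _ u])
    fix v a assume v: "v \<in> carrier G" and a: "a \<in> I"
    have "defect v b = defect (v \<otimes> a \<otimes> a) b"
      using v a involution I_carrier by (simp add: m_assoc)
    then show "defect (v \<otimes> a) b = defect v b"
      using shift v a b I_carrier by simp
  qed
  then show ?thesis
    using defect_one_left I_carrier b by simp
qed

end

theorem (in jensen_map) additive_if_generated_by_involutions_with_square_products:
  assumes gen: "generate G I = carrier G" and involution: "\<And>a. a \<in> I \<Longrightarrow> a \<otimes> a = \<one>"
    and square: "\<And>a b. a \<in> I \<Longrightarrow> b \<in> I \<Longrightarrow> \<exists>t\<in>carrier G. t \<otimes> t = a \<otimes> b"
    and x: "x \<in> carrier G" and y: "y \<in> carrier G"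
  shows "f (x \<otimes> y) = f x + f y"
proof -
  interpret jensen_class_function G f
    using jensen_map_axioms map_commute_if_generated_by_involutions[OF gen involution]
    by (simp add: jensen_class_function_def jensen_class_function_axioms_def)
  have "defect x y = defect x \<one>"
  proof (rule right_invariant_on_generators_imp_constant[OF gen, of "defect x", OF _ y])
    fix v b assume v: "v \<in> carrier G" and b: "b \<in> I"
    have b_carrier: "b \<in> carrier G"
      using b generators_subset_carrier[OF gen] by blast
    show "defect x (v \<otimes> b) = defect x v"
      using defect_cocycle[OF x v b_carrier] defect_right_generator[OF gen involution square _ b] x v
      by simp
  qed
  then show ?thesis
    using defect_one_right[OF x] by (simp add: defect_def algebra_simps)
qed

lemma (in group) additive_map_one:
  fixes f :: "'a \<Rightarrow> 'h::ab_group_add"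
  assumes "\<forall>x\<in>carrier G. \<forall>y\<in>carrier G. f (x \<otimes> y) = f x + f y"
  shows "f \<one> = 0"
  using assms[rule_format, of \<one> \<one>] by simp

lemma (in group) additive_map_inv:
  fixes f :: "'a \<Rightarrow> 'h::ab_group_add"
  assumes additive: "\<forall>x\<in>carrier G. \<forall>y\<in>carrier G. f (x \<otimes> y) = f x + f y"
    and x: "x \<in> carrier G"
  shows "f (inv x) = - f x"
  using additive[rule_format, of x "inv x"] additive_map_one[OF additive] x
  by (simp add: eq_neg_iff_add_eq_0 add.commute)

lemma (in group) additive_map_jensen_right:
  fixes f :: "'a \<Rightarrow> 'h::ab_group_add"
  assumes additive: "\<forall>x\<in>carrier G. \<forall>y\<in>carrier G. f (x \<otimes> y) = f x + f y"
    and "x \<in> carrier G" "y \<in> carrier G"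
  shows "f (x \<otimes> y) + f (x \<otimes> inv y) = f x + f x"
  using additive additive_map_inv[OF additive] assms(2,3) by simp

lemma (in group) additive_map_jensen_left:
  fixes f :: "'a \<Rightarrow> 'h::ab_group_add"
  assumes additive: "\<forall>x\<in>carrier G. \<forall>y\<in>carrier G. f (x \<otimes> y) = f x + f y"
    and "x \<in> carrier G" "y \<in> carrier G"
  shows "f (x \<otimes> y) + f (inv x \<otimes> y) = f y + f y"
  using additive additive_map_inv[OF additive] assms(2,3) by simp

lemma (in group) Hom_subset_S12: "Hom G \<subseteq> (S12 G :: ('a \<Rightarrow> 'h::ab_group_add) set)"
proof
  fix h :: "'a \<Rightarrow> 'h" assume "h \<in> Hom G"
  then have "h \<in> extensional (carrier G)"
    and additive: "\<forall>x\<in>carrier G. \<forall>y\<in>carrier G. h (x \<otimes> y) = h x + h y"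
    by (simp_all add: Hom_def)
  then show "h \<in> S12 G"
    unfolding S12_def S1_def S2_def
    using additive_map_one[OF additive] additive_map_jensen_right[OF additive]
      additive_map_jensen_left[OF additive]
    by simp
qed

lemma (in group) Hom_vanishes_on_derived:
  fixes h :: "'a \<Rightarrow> 'h::ab_group_add"
  assumes h: "h \<in> Hom G" and x: "x \<in> derived G (carrier G)"
  shows "h x = 0"
proof -
  have additive: "\<forall>x\<in>carrier G. \<forall>y\<in>carrier G. h (x \<otimes> y) = h x + h y"
    using h by (simp add: Hom_def)
  define K where "K = {x \<in> carrier G. h x = 0}"
  have "subgroup K G"
    by (rule subgroupI)
      (auto simp: K_def additive additive_map_one[OF additive] additive_map_inv[OF additive])
  moreover have "derived_set G (carrier G) \<subseteq> K"
    by (auto simp: K_def additive additive_map_inv[OF additive])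
  ultimately have "derived G (carrier G) \<subseteq> K"
    unfolding derived_def by (rule generate_subgroup_incl[rotated])
  then show ?thesis
    using x by (auto simp: K_def)
qed

definition coset_lift :: "('a, 'm) monoid_scheme \<Rightarrow> 'a set \<Rightarrow> ('a \<Rightarrow> 'h) \<Rightarrow> 'a set \<Rightarrow> 'h" where
  "coset_lift G H h = (\<lambda>A\<in>carrier (G Mod H). h (SOME x. x \<in> A))"

context normal
begin

lemma coset_in_FactGroup: "x \<in> carrier G \<Longrightarrow> H #> x \<in> carrier (G Mod H)"
  by (auto simp: carrier_FactGroup)

lemma some_in_coset: "x \<in> carrier G \<Longrightarrow> (SOME y. y \<in> H #> x) \<in> H #> x"
  using rcos_self[OF _ subgroup_axioms] by (rule someI)

lemma coset_lift_coset:
  fixes h :: "'a \<Rightarrow> 'h::ab_group_add"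
  assumes h: "h \<in> Hom G" "\<forall>n\<in>H. h n = 0" and x: "x \<in> carrier G"
  shows "coset_lift G H h (H #> x) = h x"
proof -
  obtain n where "n \<in> H" "(SOME y. y \<in> H #> x) = n \<otimes> x"
    using some_in_coset[OF x] unfolding r_coset_def by blast
  then show ?thesis
    using h x coset_in_FactGroup[OF x] by (simp add: coset_lift_def Hom_def)
qed

lemma coset_lift_Hom:
  fixes h :: "'a \<Rightarrow> 'h::ab_group_add"
  assumes h: "h \<in> Hom G" "\<forall>n\<in>H. h n = 0"
  shows "coset_lift G H h \<in> Hom (G Mod H)"
  unfolding Hom_def
proof (intro CollectI conjI ballI)
  show "coset_lift G H h \<in> extensional (carrier (G Mod H))"
    by (simp add: coset_lift_def)
  fix A B assume "A \<in> carrier (G Mod H)" "B \<in> carrier (G Mod H)"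
  then obtain x y where "x \<in> carrier G" "A = H #> x" "y \<in> carrier G" "B = H #> y"
    by (auto simp: carrier_FactGroup)
  then show "coset_lift G H h (A \<otimes>\<^bsub>G Mod H\<^esub> B) = coset_lift G H h A + coset_lift G H h B"
    using h coset_lift_coset[OF h] by (simp add: rcos_sum Hom_def)
qed

lemma Hom_FactGroup_comp_coset:
  fixes \<phi> :: "'a set \<Rightarrow> 'h::ab_group_add"
  assumes "\<phi> \<in> Hom (G Mod H)"
  shows "(\<lambda>x\<in>carrier G. \<phi> (H #> x)) \<in> Hom G" "\<forall>n\<in>H. (\<lambda>x\<in>carrier G. \<phi> (H #> x)) n = 0"
proof -
  have additive: "\<forall>A\<in>carrier (G Mod H). \<forall>B\<in>carrier (G Mod H).
      \<phi> (A \<otimes>\<^bsub>G Mod H\<^esub> B) = \<phi> A + \<phi> B"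
    using assms by (simp add: Hom_def)
  then show "(\<lambda>x\<in>carrier G. \<phi> (H #> x)) \<in> Hom G"
    using coset_in_FactGroup by (auto simp: Hom_def rcos_sum[symmetric])
  have "\<phi> H = 0"
    using group.additive_map_one[OF factorgroup_is_group additive] by simp
  then show "\<forall>n\<in>H. (\<lambda>x\<in>carrier G. \<phi> (H #> x)) n = 0"
    by (auto simp: coset_join2 subgroup_axioms)
qed

lemma coset_lift_comp_coset:
  fixes \<phi> :: "'a set \<Rightarrow> 'h::ab_group_add"
  assumes \<phi>: "\<phi> \<in> Hom (G Mod H)"
  shows "coset_lift G H (\<lambda>x\<in>carrier G. \<phi> (H #> x)) = \<phi>"
proof (rule extensionalityI[of _ "carrier (G Mod H)"])
  show "\<phi> \<in> extensional (carrier (G Mod H))"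
    using \<phi> by (simp add: Hom_def)
  fix A assume "A \<in> carrier (G Mod H)"
  then obtain x where x: "x \<in> carrier G" "A = H #> x"
    by (auto simp: carrier_FactGroup)
  have "H #> (SOME y. y \<in> H #> x) = H #> x"
    using repr_independence[OF some_in_coset x(1) subgroup_axioms] x by simp
  then show "coset_lift G H (\<lambda>x\<in>carrier G. \<phi> (H #> x)) A = \<phi> A"
    using x some_in_coset[OF x(1)] coset_in_FactGroup elemrcos_carrier[OF is_group x(1)]
    by (simp add: coset_lift_def)
qed (simp add: coset_lift_def)

lemma bij_betw_Hom_FactGroup:
  "bij_betw (\<lambda>\<phi>. \<lambda>x\<in>carrier G. \<phi> (H #> x)) (Hom (G Mod H) :: ('a set \<Rightarrow> 'h::ab_group_add) set)
     {h \<in> Hom G. \<forall>n\<in>H. h n = 0}"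
proof (rule bij_betw_byWitness[where f' = "coset_lift G H"])
  show "\<forall>h\<in>{h \<in> Hom G. \<forall>n\<in>H. h n = 0}. (\<lambda>x\<in>carrier G. coset_lift G H h (H #> x)) = h"
    by (auto intro!: extensionalityI[of _ "carrier G"] simp: coset_lift_coset Hom_def)
qed (use coset_lift_comp_coset Hom_FactGroup_comp_coset coset_lift_Hom in blast)+

end

lemma (in group) bij_betw_Hom_abelianization:
  "bij_betw (\<lambda>\<phi>. \<lambda>x\<in>carrier G. \<phi> (derived G (carrier G) #> x))
     (Hom (G Mod derived G (carrier G)) :: ('a set \<Rightarrow> 'h::ab_group_add) set) (Hom G)"
proof -
  have "bij_betw (\<lambda>\<phi>. \<lambda>x\<in>carrier G. \<phi> (derived G (carrier G) #> x))
      (Hom (G Mod derived G (carrier G)) :: ('a set \<Rightarrow> 'h) set)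
      {h \<in> Hom G. \<forall>n\<in>derived G (carrier G). h n = 0}"
    by (rule normal.bij_betw_Hom_FactGroup[OF derived_self_is_normal])
  also have "{h \<in> Hom G. \<forall>n\<in>derived G (carrier G). h n = 0} = (Hom G :: ('a \<Rightarrow> 'h) set)"
    using Hom_vanishes_on_derived by blast
  finally show ?thesis .
qed

theorem mainTheorem5:
  fixes G :: "('g, 'm) monoid_scheme" and I :: "'g set"
  assumes "group G"
    and "I \<subseteq> carrier G"
    and "\<forall>i\<in>I. i \<otimes>\<^bsub>G\<^esub> i = \<one>\<^bsub>G\<^esub>"
    and "generate G I = carrier G"
    and "\<forall>a\<in>I. \<forall>b\<in>I. \<exists>t\<in>carrier G. t \<otimes>\<^bsub>G\<^esub> t = a \<otimes>\<^bsub>G\<^esub> b"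
  shows "(\<forall>f :: 'g \<Rightarrow> 'h::ab_group_add.
            (f \<one>\<^bsub>G\<^esub> = 0 \<and>
             (\<forall>x\<in>carrier G. \<forall>y\<in>carrier G.
                f (x \<otimes>\<^bsub>G\<^esub> y) + f (x \<otimes>\<^bsub>G\<^esub> inv\<^bsub>G\<^esub> y) = f x + f x))
            \<longrightarrow> (\<forall>x\<in>carrier G. \<forall>y\<in>carrier G. f (x \<otimes>\<^bsub>G\<^esub> y) = f x + f y)
              \<and> (\<forall>x\<in>carrier G. \<forall>y\<in>carrier G.
                    f (x \<otimes>\<^bsub>G\<^esub> y) + f (inv\<^bsub>G\<^esub> x \<otimes>\<^bsub>G\<^esub> y) = f y + f y))
       \<and> (S1 G :: ('g \<Rightarrow> 'h) set) = S12 G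
       \<and> (S12 G :: ('g \<Rightarrow> 'h) set) = Hom G
       \<and> bij_betw (\<lambda>\<phi>. \<lambda>x\<in>carrier G. \<phi> (derived G (carrier G) #>\<^bsub>G\<^esub> x))
                  (Hom (G Mod derived G (carrier G)) :: ('g set \<Rightarrow> 'h) set)
                  (Hom G :: ('g \<Rightarrow> 'h) set)
       \<and> (\<forall>\<phi>\<in>(Hom (G Mod derived G (carrier G)) :: ('g set \<Rightarrow> 'h) set).
            \<forall>\<psi>\<in>Hom (G Mod derived G (carrier G)).
             (\<lambda>x\<in>carrier G.
                (\<lambda>A\<in>carrier (G Mod derived G (carrier G)). \<phi> A + \<psi> A)
                  (derived G (carrier G) #>\<^bsub>G\<^esub> x))
             = (\<lambda>x\<in>carrier G. \<phi> (derived G (carrier G) #>\<^bsub>G\<^esub> x)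
                                + \<psi> (derived G (carrier G) #>\<^bsub>G\<^esub> x)))"
proof -
  interpret group G by (rule assms(1))
  let ?N = "derived G (carrier G)"
  have additive: "\<forall>x\<in>carrier G. \<forall>y\<in>carrier G. f (x \<otimes>\<^bsub>G\<^esub> y) = f x + f y"
    if "f \<one>\<^bsub>G\<^esub> = 0"
      "\<forall>x\<in>carrier G. \<forall>y\<in>carrier G. f (x \<otimes>\<^bsub>G\<^esub> y) + f (x \<otimes>\<^bsub>G\<^esub> inv\<^bsub>G\<^esub> y) = f x + f x"
    for f :: "'g \<Rightarrow> 'h"
  proof -
    interpret jensen_map G f
      using that by unfold_locales auto
    show ?thesis
      using additive_if_generated_by_involutions_with_square_products assms(3-5) by blast
  qed
  have S1_Hom: "(S1 G :: ('g \<Rightarrow> 'h) set) \<subseteq> Hom G"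
    unfolding S1_def Hom_def using additive by blast
  have S1_S12_Hom: "(S1 G :: ('g \<Rightarrow> 'h) set) = S12 G" "(S12 G :: ('g \<Rightarrow> 'h) set) = Hom G"
    using S1_Hom Hom_subset_S12 by (auto simp: S12_def)
  have coset: "?N #>\<^bsub>G\<^esub> x \<in> carrier (G Mod ?N)" if "x \<in> carrier G" for x
    using normal.coset_in_FactGroup[OF derived_self_is_normal that] .
  show ?thesis
    apply (intro conjI allI impI)
         subgoal using additive by simp
        subgoal for f using additive_map_jensen_left[OF additive[of f]] by blast
       subgoal using S1_S12_Hom(1) .
      subgoal using S1_S12_Hom(2) .
     subgoal by (rule bij_betw_Hom_abelianization)
    subgoal using coset by (auto intro!: restrict_ext)
    done
qed

end
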